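(* Let $B$ be a finite Blaschke product of degree $2$. If $M(B)\le 3$ then $m(B)\ge1$, and if $M(B)<3$ then $m(B)>1$. Equivalently: if the restriction of $z\mapsto z^3/B(z)$ to $\mathbb T$ is a homeomorphism of $\mathbb T$, then so is the restriction of $z\mapsto B(z)/z$; and if $z^3/B(z)$ is a diffeomorphism of $\mathbb T$, then so is $B(z)/z$.
   Context: A finite Blaschke product of degree $n$ is $B(z)=\alpha\prod_{k=1}^n \frac{z-a_k}{1-\overline{a_k}z}$ with $a_k\in\mathbb D=\{|z|<1\}$, $\alpha\in\mathbb T=\{|z|=1\}$; $M(B)=\sup_{|z|=1}|B'(z)|$, $m(B)=\inf_{|z|=1}|B'(z)|$. For a Blaschke product of degree $n$ it is known that $B(z)/z^{n-1}$ is a homeomorphism (resp. diffeomorphism) of $\mathbb T$ iff $m(B)\ge n-1$ (resp. $>n-1$), and $z^{n+1}/B(z)$ is a homeomorphism (resp. diffeomorphism) of $\mathbb T$ iff $M(B)\le n+1$ (resp. $<n+1$). *)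

theory Defs
  imports "HOL-Analysis.Analysis"
begin

definition blaschke :: "complex \<Rightarrow> complex list \<Rightarrow> complex \<Rightarrow> complex" where
  "blaschke alpha as z = alpha * prod_list (map (\<lambda>a. (z - a) / (1 - cnj a * z)) as)"

definition is_blaschke :: "nat \<Rightarrow> (complex \<Rightarrow> complex) \<Rightarrow> bool" where
  "is_blaschke n B \<longleftrightarrow> (\<exists>alpha as. cmod alpha = 1 \<and> length as = n \<and>
      (\<forall>a\<in>set as. cmod a < 1) \<and> B = blaschke alpha as)"

definition Mder :: "(complex \<Rightarrow> complex) \<Rightarrow> real" where
  "Mder B = (SUP z\<in>sphere 0 1. cmod (deriv B z))"

definition mder :: "(complex \<Rightarrow> complex) \<Rightarrow> real" where
  "mder B = (INF z\<in>sphere 0 1. cmod (deriv B z))"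

end

theory Submission
  imports Defs "HOL-Complex_Analysis.Complex_Analysis"
begin

text \<open>On the unit circle |B'(z)| is the sum of the Poisson kernels P(a, z) of the zeros a of B, so
  both claims concern S = P(a1, -) + P(a2, -). Fix z0 on the circle and put
  p(z) = (z - a1) (z - a2) (z - z0). On the circle Re (3 - z p'(z)/p(z)) = (3 - S(z))/2, so if
  S <= 3 the function |z - z0|^2 (3 - z p'(z)/p(z)), written in w = 1/z, is holomorphic on the
  closed disc with nonnegative real part. By the open mapping theorem it has no zero inside the
  disc, hence neither has the quadratic q(w) = w^2 (3 p - z p')(1/w). Writing
  q(w) = A (1 - g1 w) (1 - g2 w) with |g1|, |g2| <= 1 and evaluating the logarithmic derivative of q
  at conj z0 gives S(z0) = 1 + (P(g1 conj z0, 1) + P(g2 conj z0, 1))/2 >= 1. If S < 3, then q has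
  no zero on the closed disc either, so |g1|, |g2| < 1 and the inequality is strict.\<close>

definition poisson_kernel :: "complex \<Rightarrow> complex \<Rightarrow> real" where
  "poisson_kernel a z = (1 - (cmod a)\<^sup>2) / (cmod (z - a))\<^sup>2"

lemma poisson_kernel_nonneg: "cmod a \<le> 1 \<Longrightarrow> 0 \<le> poisson_kernel a z"
  unfolding poisson_kernel_def by (simp add: power_le_one)

lemma poisson_kernel_pos: "cmod a < 1 \<Longrightarrow> z \<noteq> a \<Longrightarrow> 0 < poisson_kernel a z"
  unfolding poisson_kernel_def by (simp add: abs_square_less_1)

lemma continuous_on_poisson_kernel:
  "cmod a < 1 \<Longrightarrow> continuous_on (sphere 0 1) (poisson_kernel a)"
  unfolding poisson_kernel_def by (intro continuous_intros) auto

lemma Re_herglotz_kernel: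
  assumes "cmod z = 1" and "z \<noteq> a"
  shows "Re ((z + a) / (z - a)) = poisson_kernel a z"
proof -
  have z: "(Re z)\<^sup>2 + (Im z)\<^sup>2 = 1"
    using assms(1) by (metis cmod_power2 one_power2)
  have "(Re z - Re a)\<^sup>2 + (Im z - Im a)\<^sup>2 \<noteq> 0"
    using assms(2) by (simp add: complex_eq_iff)
  with z show ?thesis
    unfolding poisson_kernel_def cmod_power2 Re_divide
    by (simp add: field_simps power2_eq_square)
qed

lemma one_minus_mult_nonzero:
  assumes "cmod a < 1" and "cmod w \<le> 1"
  shows "1 - a * w \<noteq> 0"
proof
  assume "1 - a * w = 0"
  then have "1 = cmod a * cmod w"
    by (metis eq_iff_diff_eq_0 norm_mult norm_one)
  also have "\<dots> < 1"
    using assms by (meson mult_left_le norm_ge_zero order_le_less_trans)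
  finally show False by simp
qed

lemma blaschke_Nil: "blaschke alpha [] = (\<lambda>z. alpha)"
  by (simp add: blaschke_def fun_eq_iff)

lemma blaschke_Cons:
  "blaschke alpha (a # as) = (\<lambda>z. (z - a) / (1 - cnj a * z) * blaschke alpha as z)"
  by (simp add: blaschke_def fun_eq_iff mult.left_commute)

lemma blaschke_factor_on_circle:
  assumes z: "cmod z = 1" and a: "cmod a < 1"
  shows "cmod ((z - a) / (1 - cnj a * z)) = 1"
    and "((\<lambda>z. (z - a) / (1 - cnj a * z)) has_field_derivative
           (z - a) / (1 - cnj a * z) * of_real (poisson_kernel a z) / z) (at z)"
proof -
  have "z * cnj z = 1"
    using complex_norm_square[of z] z by simp
  then have denom: "1 - cnj a * z = z * cnj (z - a)"
    by (simp add: algebra_simps)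
  have "z - a \<noteq> 0" "cnj (z - a) \<noteq> 0" "z \<noteq> 0"
    using z a by auto
  then show "cmod ((z - a) / (1 - cnj a * z)) = 1"
    unfolding denom using z by (simp add: norm_divide norm_mult flip: complex_cnj_diff)
  have "((\<lambda>z. (z - a) / (1 - cnj a * z)) has_field_derivative
           (1 - cnj a * a) / (1 - cnj a * z)\<^sup>2) (at z)"
    using one_minus_mult_nonzero[of "cnj a" z] z a
    by (auto intro!: derivative_eq_intros simp: power2_eq_square algebra_simps)
  moreover have "(1 - cnj a * a) / (1 - cnj a * z)\<^sup>2
      = (z - a) / (1 - cnj a * z) * of_real (poisson_kernel a z) / z"
    using \<open>z - a \<noteq> 0\<close> \<open>cnj (z - a) \<noteq> 0\<close> \<open>z \<noteq> 0\<close>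
    unfolding poisson_kernel_def denom of_real_divide of_real_diff of_real_1 complex_norm_square
    by (simp add: field_simps power2_eq_square del: complex_cnj_diff)
  ultimately show "((\<lambda>z. (z - a) / (1 - cnj a * z)) has_field_derivative
           (z - a) / (1 - cnj a * z) * of_real (poisson_kernel a z) / z) (at z)"
    by simp
qed

lemma norm_blaschke_on_circle:
  assumes "cmod z = 1" and "\<forall>a\<in>set as. cmod a < 1"
  shows "cmod (blaschke alpha as z) = cmod alpha"
  using assms(2)
  by (induction as)
    (simp_all add: blaschke_Nil blaschke_Cons norm_mult blaschke_factor_on_circle(1)[OF assms(1)]
      del: times_divide_eq_left)

lemma blaschke_has_field_derivative_on_circle:
  assumes z: "cmod z = 1" and "\<forall>a\<in>set as. cmod a < 1"
  shows "(blaschke alpha as has_field_derivative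
            blaschke alpha as z * of_real (\<Sum>a\<leftarrow>as. poisson_kernel a z) / z) (at z)"
  using assms(2)
proof (induction as)
  case Nil
  then show ?case by (simp add: blaschke_Nil)
next
  case (Cons a as)
  have "((\<lambda>z. (z - a) / (1 - cnj a * z) * blaschke alpha as z) has_field_derivative
          (z - a) / (1 - cnj a * z) * (blaschke alpha as z * of_real (\<Sum>a\<leftarrow>as. poisson_kernel a z) / z)
          + (z - a) / (1 - cnj a * z) * of_real (poisson_kernel a z) / z * blaschke alpha as z)
         (at z)"
    using Cons by (intro DERIV_mult' blaschke_factor_on_circle(2) z) auto
  moreover have "u * (b * of_real S / z) + u * of_real P / z * b = u * b * of_real (P + S) / z"
    for u b :: complex and P S :: real
    by (simp add: algebra_simps add_divide_distrib)
  ultimately show ?case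
    by (simp only: blaschke_Cons list.map sum_list.Cons)
qed

lemma norm_deriv_blaschke_on_circle:
  assumes "cmod alpha = 1" and "cmod z = 1" and "\<forall>a\<in>set as. cmod a < 1"
  shows "cmod (deriv (blaschke alpha as) z) = (\<Sum>a\<leftarrow>as. poisson_kernel a z)"
proof -
  have "(\<Sum>a\<leftarrow>as. poisson_kernel a z) \<ge> 0"
    using assms(3) by (intro sum_list_nonneg) (auto intro!: poisson_kernel_nonneg)
  then show ?thesis
    using DERIV_imp_deriv[OF blaschke_has_field_derivative_on_circle[OF assms(2,3)]]
      norm_blaschke_on_circle[OF assms(2,3)] assms(1,2)
    by (simp add: norm_mult norm_divide)
qed

lemma Re_nonneg_frontier:
  fixes f :: "complex \<Rightarrow> complex"
  assumes "f holomorphic_on interior S" and "continuous_on (closure S) f" and "bounded S"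
    and "\<And>z. z \<in> frontier S \<Longrightarrow> 0 \<le> Re (f z)" and "w \<in> S"
  shows "0 \<le> Re (f w)"
proof -
  have "norm (exp (- f w)) \<le> 1"
  proof (rule maximum_modulus_frontier[where f = "\<lambda>z. exp (- f z)"])
    show "(\<lambda>z. exp (- f z)) holomorphic_on interior S"
      using assms(1) by (intro holomorphic_intros)
    show "continuous_on (closure S) (\<lambda>z. exp (- f z))"
      using assms(2) by (intro continuous_intros)
    show "norm (exp (- f z)) \<le> 1" if "z \<in> frontier S" for z
      using assms(4)[OF that] by (simp add: norm_exp_eq_Re)
  qed (use assms in auto)
  then show ?thesis
    by (simp add: norm_exp_eq_Re)
qed

lemma Re_nonneg_zero_imp_zero:
  fixes f :: "complex \<Rightarrow> complex"
  assumes "f holomorphic_on S" and "open S" and "connected S"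
    and "\<And>z. z \<in> S \<Longrightarrow> 0 \<le> Re (f z)" and "w0 \<in> S" and "f w0 = 0" and "w \<in> S"
  shows "f w = 0"
proof -
  have "f constant_on S"
  proof (rule ccontr)
    assume "\<not> f constant_on S"
    then have "open (f ` S)"
      using open_mapping_thm[OF assms(1-3) assms(2) subset_refl] by blast
    moreover have "0 \<in> f ` S"
      using assms(5,6) by force
    ultimately obtain e where "e > 0" and "ball 0 e \<subseteq> f ` S"
      by (meson openE)
    moreover have "- complex_of_real (e / 2) \<in> ball 0 e"
      using \<open>e > 0\<close> by simp
    ultimately obtain z where "z \<in> S" and "f z = - of_real (e / 2)"
      by (metis imageE subsetD)
    then show False
      using assms(4)[of z] \<open>e > 0\<close> by simp
  qed
  then show ?thesis
    using assms(5-7) unfolding constant_on_def by metis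
qed

lemma quadratic_reciprocal_roots:
  fixes A B C :: complex
  assumes "A \<noteq> 0"
  obtains g1 g2 where "B = - A * (g1 + g2)" and "C = A * g1 * g2"
proof
  define r where "r = csqrt (B\<^sup>2 - 4 * A * C)"
  show "B = - A * ((- B + r) / (2 * A) + (- B - r) / (2 * A))"
    using assms by (simp add: field_simps)
  have "r\<^sup>2 = B\<^sup>2 - 4 * A * C"
    by (simp add: r_def)
  then show "C = A * ((- B + r) / (2 * A)) * ((- B - r) / (2 * A))"
    using assms by (simp add: field_simps power2_eq_square) (simp flip: distrib_left)
qed

lemma norm_le_1_if_factor_nonzero_in_ball:
  fixes g :: complex
  assumes "\<And>w. cmod w < 1 \<Longrightarrow> 1 - g * w \<noteq> 0"
  shows "cmod g \<le> 1"
proof (rule ccontr)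
  assume "\<not> cmod g \<le> 1"
  then have "cmod (inverse g) < 1" and "g \<noteq> 0"
    by (auto simp: norm_inverse inverse_less_1_iff)
  then show False
    using assms[of "inverse g"] by simp
qed

lemma norm_less_1_if_factor_nonzero_in_cball:
  fixes g :: complex
  assumes "\<And>w. cmod w \<le> 1 \<Longrightarrow> 1 - g * w \<noteq> 0"
  shows "cmod g < 1"
proof (rule ccontr)
  assume "\<not> cmod g < 1"
  then have "cmod (inverse g) \<le> 1" and "g \<noteq> 0"
    by (auto simp: norm_inverse inverse_le_1_iff)
  then show False
    using assms[of "inverse g"] by simp
qed

text \<open>With p(z) = (z - a1) (z - a2) (z - z0), this is w^2 (3 p(z) - z p'(z)) at z = 1/w, i.e. the
  reversed polar derivative of p with respect to the origin.\<close>
definition polar_poly :: "complex \<Rightarrow> complex \<Rightarrow> complex \<Rightarrow> complex \<Rightarrow> complex" where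
  "polar_poly a1 a2 z0 w =
     - (a1 + a2 + z0) + 2 * (a1 * a2 + (a1 + a2) * z0) * w - 3 * (a1 * a2 * z0) * w\<^sup>2"

definition caratheodory_fn :: "complex \<Rightarrow> complex \<Rightarrow> complex \<Rightarrow> complex \<Rightarrow> complex" where
  "caratheodory_fn a1 a2 z0 w = (w - cnj z0) * polar_poly a1 a2 z0 w / ((1 - a1 * w) * (1 - a2 * w))"

lemma polar_poly_at_cnj:
  assumes "cmod z0 = 1"
  shows "polar_poly a1 a2 z0 (cnj z0) = (z0 - a1) * (z0 - a2) * (- cnj z0)"
proof -
  have cnj: "cnj z0 = 1 / z0" and "z0 \<noteq> 0"
    using divide_conv_cnj[OF assms, of 1] assms by auto
  then show ?thesis
    unfolding polar_poly_def cnj by (simp add: field_simps power2_eq_square)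
qed

lemma caratheodory_fn_on_circle:
  assumes z: "cmod z = 1" and z0: "cmod z0 = 1" and "z \<noteq> a1" "z \<noteq> a2" "z \<noteq> z0"
  shows "caratheodory_fn a1 a2 z0 (cnj z) = of_real ((cmod (z - z0))\<^sup>2)
           * (3 - ((z + a1) / (z - a1) + (z + a2) / (z - a2) + (z + z0) / (z - z0))) / 2"
proof -
  have cnj: "cnj z = 1 / z" "cnj z0 = 1 / z0" and "z \<noteq> 0" "z0 \<noteq> 0"
    using divide_conv_cnj[OF z, of 1] divide_conv_cnj[OF z0, of 1] z z0 by auto
  have norm_sq: "of_real ((cmod (z - z0))\<^sup>2) = (z - z0) * (1 / z - 1 / z0)"
    unfolding complex_norm_square cnj[symmetric] by simp
  have factors: "1 - a1 * (1 / z) = (z - a1) / z" "1 - a2 * (1 / z) = (z - a2) / z"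
    using \<open>z \<noteq> 0\<close> by (simp_all add: field_simps)
  \<comment> \<open>with the differences z - a as variables, every denominator is atomic for field_simps\<close>
  define u1 u2 u0 where "u1 = z - a1" and "u2 = z - a2" and "u0 = z - z0"
  then have a: "a1 = z - u1" "a2 = z - u2" "z0 = z - u0"
    by simp_all
  have "u1 \<noteq> 0" "u2 \<noteq> 0" "u0 \<noteq> 0" "z - u0 \<noteq> 0"
    using assms(3-5) \<open>z0 \<noteq> 0\<close> by (simp_all add: u1_def u2_def u0_def)
  then show ?thesis
    using \<open>z \<noteq> 0\<close>
    unfolding caratheodory_fn_def polar_poly_def cnj norm_sq factors
    unfolding u1_def[symmetric] u2_def[symmetric] u0_def[symmetric]
    unfolding a
    by (simp add: field_simps) (simp add: algebra_simps power2_eq_square)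
qed

lemma Re_caratheodory_fn_on_circle:
  assumes z: "cmod z = 1" and z0: "cmod z0 = 1" and a1: "cmod a1 < 1" and a2: "cmod a2 < 1"
  shows "Re (caratheodory_fn a1 a2 z0 (cnj z))
           = (cmod (z - z0))\<^sup>2 * (3 - (poisson_kernel a1 z + poisson_kernel a2 z)) / 2"
proof (cases "z = z0")
  case True
  then show ?thesis
    by (simp add: caratheodory_fn_def)
next
  case False
  have "z \<noteq> a1" "z \<noteq> a2"
    using z a1 a2 by auto
  then have "Re (caratheodory_fn a1 a2 z0 (cnj z)) = (cmod (z - z0))\<^sup>2
      * (3 - (Re ((z + a1) / (z - a1)) + Re ((z + a2) / (z - a2)) + Re ((z + z0) / (z - z0)))) / 2"
    by (simp add: caratheodory_fn_on_circle[OF z z0 _ _ False])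
  moreover have "poisson_kernel z0 z = 0"
    using z0 by (simp add: poisson_kernel_def)
  ultimately show ?thesis
    using Re_herglotz_kernel[OF z] False \<open>z \<noteq> a1\<close> \<open>z \<noteq> a2\<close> by simp
qed

lemma holomorphic_caratheodory_fn:
  assumes "cmod a1 < 1" and "cmod a2 < 1"
  shows "caratheodory_fn a1 a2 z0 holomorphic_on cball 0 1"
  unfolding caratheodory_fn_def[abs_def] polar_poly_def
  using one_minus_mult_nonzero assms by (auto intro!: holomorphic_intros)

lemma Re_caratheodory_fn_nonneg:
  assumes a1: "cmod a1 < 1" and a2: "cmod a2 < 1" and z0: "cmod z0 = 1"
    and S_le_3: "\<And>z. cmod z = 1 \<Longrightarrow> poisson_kernel a1 z + poisson_kernel a2 z \<le> 3"
    and w: "cmod w < 1"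
  shows "0 \<le> Re (caratheodory_fn a1 a2 z0 w)"
proof (rule Re_nonneg_frontier[where f = "caratheodory_fn a1 a2 z0" and S = "ball 0 1"])
  have holo: "caratheodory_fn a1 a2 z0 holomorphic_on cball 0 1"
    using holomorphic_caratheodory_fn[OF a1 a2] .
  then show "caratheodory_fn a1 a2 z0 holomorphic_on interior (ball 0 1)"
    by (rule holomorphic_on_subset) auto
  show "continuous_on (closure (ball 0 1)) (caratheodory_fn a1 a2 z0)"
    using holomorphic_on_imp_continuous_on[OF holo] by simp
  show "0 \<le> Re (caratheodory_fn a1 a2 z0 v)" if "v \<in> frontier (ball 0 1)" for v
  proof -
    have v: "cmod (cnj v) = 1"
      using that by simp
    have "0 \<le> (cmod (cnj v - z0))\<^sup>2 * (3 - (poisson_kernel a1 (cnj v) + poisson_kernel a2 (cnj v)))"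
      using S_le_3[OF v] by (intro mult_nonneg_nonneg) auto
    then show ?thesis
      using Re_caratheodory_fn_on_circle[OF v z0 a1 a2] by simp
  qed
qed (use w in auto)

lemma polar_poly_nonzero_in_ball:
  assumes a1: "cmod a1 < 1" and a2: "cmod a2 < 1" and z0: "cmod z0 = 1"
    and S_le_3: "\<And>z. cmod z = 1 \<Longrightarrow> poisson_kernel a1 z + poisson_kernel a2 z \<le> 3"
    and w: "cmod w < 1"
  shows "polar_poly a1 a2 z0 w \<noteq> 0"
proof
  assume "polar_poly a1 a2 z0 w = 0"
  let ?K = "caratheodory_fn a1 a2 z0"
  have "?K v = 0" if "v \<in> ball 0 1" for v
  proof (rule Re_nonneg_zero_imp_zero[where f = ?K and S = "ball 0 1"])
    show "?K holomorphic_on ball 0 1"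
      using holomorphic_caratheodory_fn[OF a1 a2] by (rule holomorphic_on_subset) auto
    show "?K w = 0"
      using \<open>polar_poly a1 a2 z0 w = 0\<close> by (simp add: caratheodory_fn_def)
  qed (use Re_caratheodory_fn_nonneg[OF a1 a2 z0 S_le_3] w that in auto)
  moreover have "v - cnj z0 \<noteq> 0" "(1 - a1 * v) * (1 - a2 * v) \<noteq> 0" if "v \<in> ball 0 1" for v
    using that z0 a1 a2 one_minus_mult_nonzero by auto
  ultimately have q_zero: "polar_poly a1 a2 z0 v = 0" if "v \<in> ball 0 1" for v
    using that by (simp add: caratheodory_fn_def)
  have "continuous_on (closure (ball 0 1)) (polar_poly a1 a2 z0)"
    unfolding polar_poly_def[abs_def] by (intro continuous_intros)
  then have "polar_poly a1 a2 z0 (cnj z0) = 0"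
    by (rule continuous_constant_on_closure[where S = "ball 0 1"])
      (use q_zero z0 in auto)
  moreover have "z0 \<noteq> a1" "z0 \<noteq> a2" "cnj z0 \<noteq> 0"
    using z0 a1 a2 by auto
  ultimately show False
    by (simp add: polar_poly_at_cnj[OF z0])
qed

lemma polar_poly_nonzero_in_cball:
  assumes a1: "cmod a1 < 1" and a2: "cmod a2 < 1" and z0: "cmod z0 = 1"
    and S_less_3: "\<And>z. cmod z = 1 \<Longrightarrow> poisson_kernel a1 z + poisson_kernel a2 z < 3"
    and w: "cmod w \<le> 1"
  shows "polar_poly a1 a2 z0 w \<noteq> 0"
proof (cases "cmod w < 1")
  case True
  then show ?thesis
    using polar_poly_nonzero_in_ball[OF a1 a2 z0] S_less_3 by (simp add: less_imp_le)
next
  case False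
  then have cw: "cmod (cnj w) = 1"
    using w by simp
  show ?thesis
  proof (cases "cnj w = z0")
    case True
    then have "w = cnj z0"
      by auto
    moreover have "z0 \<noteq> a1" "z0 \<noteq> a2" "cnj z0 \<noteq> 0"
      using z0 a1 a2 by auto
    ultimately show ?thesis
      by (simp add: polar_poly_at_cnj[OF z0])
  next
    case False
    then have "0 < (cmod (cnj w - z0))\<^sup>2 * (3 - (poisson_kernel a1 (cnj w) + poisson_kernel a2 (cnj w)))"
      using S_less_3[OF cw] by (intro mult_pos_pos) auto
    then have "0 < Re (caratheodory_fn a1 a2 z0 w)"
      using Re_caratheodory_fn_on_circle[OF cw z0 a1 a2] by simp
    then show ?thesis
      by (auto simp: caratheodory_fn_def)
  qed
qed

text \<open>The numerator is 2 q(w) - w q'(w) at w = conj z0, for q = polar_poly a1 a2 z0.\<close>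
lemma herglotz_sum_eq_polar_poly_quotient:
  assumes z0: "cmod z0 = 1" and "z0 \<noteq> a1" and "z0 \<noteq> a2"
  shows "(z0 + a1) / (z0 - a1) + (z0 + a2) / (z0 - a2)
      = (2 * polar_poly a1 a2 z0 0 + 2 * (a1 * a2 + (a1 + a2) * z0) * cnj z0)
          / polar_poly a1 a2 z0 (cnj z0)"
proof -
  have cnj: "cnj z0 = 1 / z0" and "z0 \<noteq> 0"
    using z0 divide_conv_cnj[OF z0, of 1] by auto
  have numerator: "2 * polar_poly a1 a2 z0 0 + 2 * (a1 * a2 + (a1 + a2) * z0) * cnj z0
      = 2 * (z0\<^sup>2 - a1 * a2) * (- cnj z0)"
    using \<open>z0 \<noteq> 0\<close> unfolding polar_poly_def cnj by (simp add: field_simps power2_eq_square)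
  have "(z0 + a1) / (z0 - a1) + (z0 + a2) / (z0 - a2) = 2 * (z0\<^sup>2 - a1 * a2) / ((z0 - a1) * (z0 - a2))"
    using assms(2,3) by (simp add: field_simps power2_eq_square)
  also have "\<dots> = 2 * (z0\<^sup>2 - a1 * a2) * (- cnj z0) / ((z0 - a1) * (z0 - a2) * (- cnj z0))"
    using \<open>z0 \<noteq> 0\<close> by simp
  finally show ?thesis
    unfolding numerator polar_poly_at_cnj[OF z0] .
qed

lemma polar_poly_reciprocal_roots:
  assumes z0: "cmod z0 = 1" and a1: "cmod a1 < 1" and a2: "cmod a2 < 1"
    and q0: "polar_poly a1 a2 z0 0 \<noteq> 0"
  obtains A g1 g2
  where "\<And>w. polar_poly a1 a2 z0 w = A * (1 - g1 * w) * (1 - g2 * w)"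
    and "poisson_kernel a1 z0 + poisson_kernel a2 z0
           = 1 + (poisson_kernel (g1 * cnj z0) 1 + poisson_kernel (g2 * cnj z0) 1) / 2"
proof -
  define A B C where "A = polar_poly a1 a2 z0 0" and "B = 2 * (a1 * a2 + (a1 + a2) * z0)"
    and "C = - 3 * (a1 * a2 * z0)"
  obtain g1 g2 where B: "B = - A * (g1 + g2)" and C: "C = A * g1 * g2"
    using quadratic_reciprocal_roots q0 unfolding A_def by blast
  have factor: "polar_poly a1 a2 z0 w = A * (1 - g1 * w) * (1 - g2 * w)" for w
  proof -
    have "polar_poly a1 a2 z0 w = A + B * w + C * w\<^sup>2"
      by (simp add: polar_poly_def A_def B_def C_def)
    then show ?thesis
      by (simp add: B C algebra_simps power2_eq_square)
  qed
  define c where "c = cnj z0"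
  have "z0 \<noteq> a1" "z0 \<noteq> a2" "c \<noteq> 0"
    using z0 a1 a2 by (auto simp: c_def)
  then have "polar_poly a1 a2 z0 c \<noteq> 0"
    unfolding c_def polar_poly_at_cnj[OF z0] by simp
  then have d1: "1 - g1 * c \<noteq> 0" and d2: "1 - g2 * c \<noteq> 0"
    unfolding factor by auto
  have inverse_one_minus: "1 / (1 - x) = (1 + (1 + x) / (1 - x)) / 2" if "1 - x \<noteq> 0" for x :: complex
    using that by (simp add: field_simps)
  have cancel_A: "A * (d1 + d2) / (A * d1 * d2) = 1 / d1 + 1 / d2" if "d1 \<noteq> 0" "d2 \<noteq> 0"
    for d1 d2
    using that q0 by (simp add: A_def field_simps)
  have numerator: "2 * A + B * c = A * ((1 - g1 * c) + (1 - g2 * c))"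
    by (simp add: B algebra_simps)
  have "(z0 + a1) / (z0 - a1) + (z0 + a2) / (z0 - a2) = (2 * A + B * c) / polar_poly a1 a2 z0 c"
    unfolding A_def B_def c_def by (rule herglotz_sum_eq_polar_poly_quotient) fact+
  also have "\<dots> = A * ((1 - g1 * c) + (1 - g2 * c)) / (A * (1 - g1 * c) * (1 - g2 * c))"
    by (simp only: factor numerator)
  also have "\<dots> = 1 / (1 - g1 * c) + 1 / (1 - g2 * c)"
    using d1 d2 by (rule cancel_A)
  also have "\<dots> = (1 + (1 + g1 * c) / (1 - g1 * c)) / 2 + (1 + (1 + g2 * c) / (1 - g2 * c)) / 2"
    by (simp only: inverse_one_minus[OF d1] inverse_one_minus[OF d2])
  finally have "Re ((z0 + a1) / (z0 - a1) + (z0 + a2) / (z0 - a2))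
      = Re ((1 + (1 + g1 * c) / (1 - g1 * c)) / 2 + (1 + (1 + g2 * c) / (1 - g2 * c)) / 2)"
    by (rule arg_cong)
  moreover have "Re ((1 + g * c) / (1 - g * c)) = poisson_kernel (g * c) 1" if "1 - g * c \<noteq> 0" for g
    using Re_herglotz_kernel[of 1 "g * c"] that by simp
  ultimately have "poisson_kernel a1 z0 + poisson_kernel a2 z0
      = (1 + poisson_kernel (g1 * c) 1) / 2 + (1 + poisson_kernel (g2 * c) 1) / 2"
    using Re_herglotz_kernel[OF z0] \<open>z0 \<noteq> a1\<close> \<open>z0 \<noteq> a2\<close> d1 d2 by simp
  then have "poisson_kernel a1 z0 + poisson_kernel a2 z0
      = 1 + (poisson_kernel (g1 * cnj z0) 1 + poisson_kernel (g2 * cnj z0) 1) / 2"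
    by (simp add: c_def add_divide_distrib)
  then show ?thesis
    by (rule that[OF factor])
qed

lemma poisson_sum_ge_1:
  assumes a1: "cmod a1 < 1" and a2: "cmod a2 < 1" and z0: "cmod z0 = 1"
    and "\<And>z. cmod z = 1 \<Longrightarrow> poisson_kernel a1 z + poisson_kernel a2 z \<le> 3"
  shows "1 \<le> poisson_kernel a1 z0 + poisson_kernel a2 z0"
proof -
  have q_nonzero: "polar_poly a1 a2 z0 w \<noteq> 0" if "cmod w < 1" for w
    using polar_poly_nonzero_in_ball[OF a1 a2 z0 assms(4) that] .
  obtain A g1 g2
    where factor: "\<And>w. polar_poly a1 a2 z0 w = A * (1 - g1 * w) * (1 - g2 * w)"
      and sum: "poisson_kernel a1 z0 + poisson_kernel a2 z0
                  = 1 + (poisson_kernel (g1 * cnj z0) 1 + poisson_kernel (g2 * cnj z0) 1) / 2"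
    using polar_poly_reciprocal_roots[OF z0 a1 a2 q_nonzero[of 0]] by auto
  have "1 - g1 * w \<noteq> 0" "1 - g2 * w \<noteq> 0" if "cmod w < 1" for w
    using q_nonzero[OF that] unfolding factor by auto
  then have "cmod g1 \<le> 1" "cmod g2 \<le> 1"
    by (simp_all add: norm_le_1_if_factor_nonzero_in_ball)
  then have "cmod (g1 * cnj z0) \<le> 1" "cmod (g2 * cnj z0) \<le> 1"
    using z0 by (simp_all add: norm_mult)
  then have "0 \<le> poisson_kernel (g1 * cnj z0) 1" "0 \<le> poisson_kernel (g2 * cnj z0) 1"
    by (simp_all add: poisson_kernel_nonneg)
  then show ?thesis
    unfolding sum by simp
qed

lemma poisson_sum_gt_1:
  assumes a1: "cmod a1 < 1" and a2: "cmod a2 < 1" and z0: "cmod z0 = 1"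
    and "\<And>z. cmod z = 1 \<Longrightarrow> poisson_kernel a1 z + poisson_kernel a2 z < 3"
  shows "1 < poisson_kernel a1 z0 + poisson_kernel a2 z0"
proof -
  have q_nonzero: "polar_poly a1 a2 z0 w \<noteq> 0" if "cmod w \<le> 1" for w
    using polar_poly_nonzero_in_cball[OF a1 a2 z0 assms(4) that] .
  obtain A g1 g2
    where factor: "\<And>w. polar_poly a1 a2 z0 w = A * (1 - g1 * w) * (1 - g2 * w)"
      and sum: "poisson_kernel a1 z0 + poisson_kernel a2 z0
                  = 1 + (poisson_kernel (g1 * cnj z0) 1 + poisson_kernel (g2 * cnj z0) 1) / 2"
    using polar_poly_reciprocal_roots[OF z0 a1 a2 q_nonzero[of 0]] by auto
  have "1 - g1 * w \<noteq> 0" "1 - g2 * w \<noteq> 0" if "cmod w \<le> 1" for w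
    using q_nonzero[OF that] unfolding factor by auto
  then have "cmod g1 < 1" "cmod g2 < 1"
    by (simp_all add: norm_less_1_if_factor_nonzero_in_cball)
  then have "cmod (g1 * cnj z0) < 1" "cmod (g2 * cnj z0) < 1"
    using z0 by (simp_all add: norm_mult)
  then have "0 < poisson_kernel (g1 * cnj z0) 1" "0 < poisson_kernel (g2 * cnj z0) 1"
    by (auto intro!: poisson_kernel_pos)
  then show ?thesis
    unfolding sum by simp
qed

theorem corollary3:
  fixes B :: "complex \<Rightarrow> complex"
  assumes "is_blaschke 2 B"
  shows "(Mder B \<le> 3 \<longrightarrow> mder B \<ge> 1) \<and> (Mder B < 3 \<longrightarrow> mder B > 1)"
proof -
  obtain alpha a1 a2 where alpha: "cmod alpha = 1" and a1: "cmod a1 < 1" and a2: "cmod a2 < 1"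
    and B: "B = blaschke alpha [a1, a2]"
    using assms unfolding is_blaschke_def numeral_2_eq_2 by (auto simp: length_Suc_conv)
  define S where "S z = poisson_kernel a1 z + poisson_kernel a2 z" for z
  have "cmod (deriv B z) = S z" if "z \<in> sphere 0 1" for z
    using norm_deriv_blaschke_on_circle[OF alpha, of z "[a1, a2]"] that a1 a2 by (simp add: B S_def)
  then have M: "Mder B = (SUP z\<in>sphere 0 1. S z)" and m: "mder B = (INF z\<in>sphere 0 1. S z)"
    unfolding Mder_def mder_def by (auto intro: SUP_cong INF_cong)
  have cont: "continuous_on (sphere 0 1) S"
    unfolding S_def[abs_def] using a1 a2 by (intro continuous_intros continuous_on_poisson_kernel)
  then have "bdd_above (S ` sphere 0 1)"
    by (intro bounded_imp_bdd_above compact_imp_bounded compact_continuous_image) auto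
  then have S_le_M: "S z \<le> Mder B" if "cmod z = 1" for z
    unfolding M using that by (intro cSUP_upper) auto
  obtain zmin where zmin: "cmod zmin = 1" and "\<And>z. cmod z = 1 \<Longrightarrow> S zmin \<le> S z"
    using continuous_attains_inf[OF compact_sphere _ cont] by auto
  then have "mder B = S zmin"
    unfolding m by (intro antisym cINF_lower cINF_greatest bdd_belowI2) auto
  then show ?thesis
    using poisson_sum_ge_1[OF a1 a2 zmin] poisson_sum_gt_1[OF a1 a2 zmin] S_le_M
    by (fastforce simp: S_def)
qed

end
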